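(* Let $k$ be a natural number, let $(X,\Sigma)$ be a measurable space, and let $\mu,\nu$ be finite measures on $(X,\Sigma)$ with $\mu$ absolutely continuous with respect to $\nu$; let $f\colon X\to[0,\infty)$ be a (measurable) Radon–Nikodym derivative $f=\frac{d\mu}{d\nu}$. Assume that one of the following holds: (I) $G=\mathbb{R}$ and $\nu$ is non-atomic; or (II) $G=\mathbb{Z}$, $X$ is finite, $\Sigma=2^X$, and $\nu$ is the counting measure. Let $q=(q_1,\dots,q_k)\in(G\cap[0,\infty))^k$ satisfy $q_1+\dots+q_k=\nu(X)$, and let $s_1\le s_2\le\dots\le s_k$ be real numbers. For $P=(A_1,\dots,A_k)\in\mathcal{P}_{\nu,q}$ define the score $s(P):=\sum_{i=1}^k s_i\,\mu(A_i)$. Let $Q=(B_1,\dots,B_k)\in\mathcal{P}_{\nu,q}$ be any partition such that $\sup_{B_i}f\le\inf_{B_j}f$ for all $i,j\in[k]$ with $i<j$ (with the conventions $\sup\emptyset=-\infty$, $\inf\emptyset=\infty$). Then $s(Q)\ge s(P)$ for every $P\in\mathcal{P}_{\nu,q}$.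
   Context: $[k]:=\{1,\dots,k\}$. $\mathcal{P}_k$ denotes the set of all ordered partitions $P=(A_1,\dots,A_k)$ of $X$ with $A_i\in\Sigma$ for all $i$ (i.e. the $A_i$ are pairwise disjoint measurable sets, possibly empty, whose union is $X$). $\mathcal{P}_{\nu,q}:=\{P=(A_1,\dots,A_k)\in\mathcal{P}_k:\ \nu(A_i)=q_i\ \text{for all } i\in[k]\}$. *)

theory Defs
  imports "HOL-Probability.Probability"
begin

definition is_atom :: "'a measure \<Rightarrow> 'a set \<Rightarrow> bool" where
  "is_atom N A \<longleftrightarrow> A \<in> sets N \<and> emeasure N A > 0 \<and>
     (\<forall>B\<in>sets N. B \<subseteq> A \<longrightarrow> emeasure N B = 0 \<or> emeasure N B = emeasure N A)"

definition non_atomic :: "'a measure \<Rightarrow> bool" where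
  "non_atomic N \<longleftrightarrow> \<not> (\<exists>A. is_atom N A)"

text \<open>Ordered partitions (A_1,...,A_k) of the space of N into measurable sets,
indexed by 1..k (values outside 1..k are irrelevant).\<close>
definition ordered_partition :: "'a measure \<Rightarrow> nat \<Rightarrow> (nat \<Rightarrow> 'a set) \<Rightarrow> bool" where
  "ordered_partition N k P \<longleftrightarrow>
     (\<forall>i\<in>{1..k}. P i \<in> sets N) \<and>
     (\<forall>i\<in>{1..k}. \<forall>j\<in>{1..k}. i \<noteq> j \<longrightarrow> P i \<inter> P j = {}) \<and>
     (\<Union>i\<in>{1..k}. P i) = space N"

definition partitions_nu_q :: "'a measure \<Rightarrow> nat \<Rightarrow> (nat \<Rightarrow> real) \<Rightarrow> (nat \<Rightarrow> 'a set) \<Rightarrow> bool" where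
  "partitions_nu_q N k q P \<longleftrightarrow> ordered_partition N k P \<and> (\<forall>i\<in>{1..k}. measure N (P i) = q i)"

definition score :: "'a measure \<Rightarrow> nat \<Rightarrow> (nat \<Rightarrow> real) \<Rightarrow> (nat \<Rightarrow> 'a set) \<Rightarrow> real" where
  "score M k s P = (\<Sum>i=1..k. s i * measure M (P i))"

end

(* Exchange argument: by Abel summation with nondecreasing weights s_i, it suffices that
   every tail union B_j \<union> ... \<union> B_k has at least the mu-mass of A_j \<union> ... \<union> A_k.
   Both tails have nu-measure q_j + ... + q_k, and the tail of Q is a superlevel set of f;
   trading the part of P's tail outside Q's tail against the equally large part of Q's tail
   outside P's tail can only increase the integral of f. *)
theory Submission
  imports Defs
begin

lemma emeasure_density_le_of_dominated:
  fixes f :: "'a \<Rightarrow> ennreal"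
  assumes f: "f \<in> borel_measurable N" and A: "A \<in> sets N" and B: "B \<in> sets N"
    and le: "emeasure N B \<le> emeasure N A"
    and dom: "\<And>x y. x \<in> A \<Longrightarrow> y \<in> B \<Longrightarrow> f y \<le> f x"
  shows "emeasure (density N f) B \<le> emeasure (density N f) A"
proof -
  \<comment> \<open>For \<open>A = {}\<close> this is \<open>\<infinity>\<close>, harmless since then \<open>B\<close> is a null set and \<open>\<infinity> * 0 = 0\<close>.\<close>
  define c where "c = (INF x\<in>A. f x)"
  have "emeasure (density N f) B = (\<integral>\<^sup>+ y. f y * indicator B y \<partial>N)"
    by (rule emeasure_density[OF f B])
  also have "\<dots> \<le> (\<integral>\<^sup>+ y. c * indicator B y \<partial>N)"
    by (intro nn_integral_mono) (auto simp: c_def indicator_def intro: INF_greatest dom)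
  also have "\<dots> = c * emeasure N B"
    by (rule nn_integral_cmult_indicator[OF B])
  also have "\<dots> \<le> c * emeasure N A"
    using le by (rule mult_left_mono) simp
  also have "\<dots> = (\<integral>\<^sup>+ x. c * indicator A x \<partial>N)"
    by (rule nn_integral_cmult_indicator[OF A, symmetric])
  also have "\<dots> \<le> (\<integral>\<^sup>+ x. f x * indicator A x \<partial>N)"
    by (intro nn_integral_mono) (auto simp: c_def indicator_def intro: INF_lower)
  also have "\<dots> = emeasure (density N f) A"
    by (rule emeasure_density[OF f A, symmetric])
  finally show ?thesis .
qed

lemma emeasure_density_le_of_superlevel_set:
  fixes f :: "'a \<Rightarrow> ennreal"
  assumes "finite_measure N" and f: "f \<in> borel_measurable N"
    and U: "U \<in> sets N" and V: "V \<in> sets N"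
    and le: "measure N V \<le> measure N U"
    and superlevel: "\<And>x y. x \<in> U \<Longrightarrow> y \<in> space N - U \<Longrightarrow> f y \<le> f x"
  shows "emeasure (density N f) V \<le> emeasure (density N f) U"
proof -
  interpret finite_measure N by fact
  let ?D = "density N f"
  have "measure N (V - U) \<le> measure N (U - V)"
    using le U V by (simp add: finite_measure_Diff' Int_commute)
  then have "emeasure N (V - U) \<le> emeasure N (U - V)"
    by (simp add: emeasure_eq_measure)
  moreover have "V - U \<subseteq> space N - U"
    using V sets.sets_into_space by blast
  ultimately have exchange: "emeasure ?D (V - U) \<le> emeasure ?D (U - V)"
    using U V superlevel by (intro emeasure_density_le_of_dominated[OF f]) auto
  have "(U \<inter> V) \<union> (V - U) = V" "(U \<inter> V) \<inter> (V - U) = {}"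
    by blast+
  then have "emeasure ?D V = emeasure ?D (U \<inter> V) + emeasure ?D (V - U)"
    using U V plus_emeasure[of "U \<inter> V" ?D "V - U"] by simp
  also have "\<dots> \<le> emeasure ?D (U \<inter> V) + emeasure ?D (U - V)"
    using exchange by (rule add_left_mono)
  also have "\<dots> = emeasure ?D U"
    using U V plus_emeasure[of "U \<inter> V" ?D "U - V"] by (simp add: Int_Diff_Un Int_Diff_disjoint)
  finally show ?thesis .
qed

lemma sum_mult_ge_of_tail_sums_nonneg:
  fixes s d :: "nat \<Rightarrow> real"
  assumes mono: "mono_on {m..k} s"
    and tails: "\<And>j. m < j \<Longrightarrow> j \<le> k \<Longrightarrow> 0 \<le> (\<Sum>i=j..k. d i)"
  shows "s m * (\<Sum>i=m..k. d i) \<le> (\<Sum>i=m..k. s i * d i)"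
proof (cases "m \<le> k")
  case True
  then show ?thesis using mono tails
  proof (induction m rule: inc_induct)
    case base
    then show ?case by simp
  next
    case (step n)
    have "s n \<le> s (Suc n)"
      using step.hyps step.prems(1) by (auto intro: mono_onD)
    then have "s n * (\<Sum>i=Suc n..k. d i) \<le> s (Suc n) * (\<Sum>i=Suc n..k. d i)"
      using step.hyps step.prems(2) by (intro mult_right_mono) auto
    also have "\<dots> \<le> (\<Sum>i=Suc n..k. s i * d i)"
      using step.prems by (intro step.IH) (auto intro: mono_on_subset)
    finally show ?case
      using step.hyps by (simp add: sum.atLeast_Suc_atMost distrib_left)
  qed
qed simp

lemma weighted_sum_le_of_tail_sums_le:
  fixes s a b :: "nat \<Rightarrow> real"
  assumes "mono_on {m..k} s"
    and tails: "\<And>j. m < j \<Longrightarrow> j \<le> k \<Longrightarrow> (\<Sum>i=j..k. a i) \<le> (\<Sum>i=j..k. b i)"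
    and total: "(\<Sum>i=m..k. a i) = (\<Sum>i=m..k. b i)"
  shows "(\<Sum>i=m..k. s i * a i) \<le> (\<Sum>i=m..k. s i * b i)"
proof -
  have "s m * (\<Sum>i=m..k. b i - a i) \<le> (\<Sum>i=m..k. s i * (b i - a i))"
    using assms tails by (intro sum_mult_ge_of_tail_sums_nonneg) (auto simp: sum_subtractf)
  then show ?thesis
    using total by (simp add: sum_subtractf right_diff_distrib)
qed

lemma measure_UN_ordered_partition:
  assumes "ordered_partition N k P" and "finite_measure X" and "sets X = sets N"
    and "J \<subseteq> {1..k}"
  shows "measure X (\<Union>i\<in>J. P i) = (\<Sum>i\<in>J. measure X (P i))"
proof -
  interpret finite_measure X by fact
  show ?thesis
  proof (rule measure_finite_Union)
    show "finite J"
      using \<open>J \<subseteq> {1..k}\<close> finite_subset by blast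
    show "P ` J \<subseteq> sets X" "disjoint_family_on P J"
      using assms by (auto simp: ordered_partition_def disjoint_family_on_def subset_iff)
  qed (simp add: emeasure_eq_measure)
qed

lemma tail_union_superlevel:
  fixes f :: "'a \<Rightarrow> real"
  assumes "ordered_partition N k Q"
    and sorted: "\<And>i j. i \<in> {1..k} \<Longrightarrow> j \<in> {1..k} \<Longrightarrow> i < j \<Longrightarrow>
                   Sup ((\<lambda>x. ereal (f x)) ` Q i) \<le> Inf ((\<lambda>x. ereal (f x)) ` Q j)"
    and x: "x \<in> (\<Union>i\<in>{j..k}. Q i)" and y: "y \<in> space N - (\<Union>i\<in>{j..k}. Q i)"
  shows "f y \<le> f x"
proof -
  obtain i where i: "i \<in> {j..k}" "x \<in> Q i"
    using x by auto
  have "y \<in> (\<Union>i\<in>{1..k}. Q i)"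
    using y \<open>ordered_partition N k Q\<close> by (simp add: ordered_partition_def)
  then obtain i' where i': "i' \<in> {1..k}" "y \<in> Q i'"
    by blast
  have "i' < j"
    using i' y by auto
  have "ereal (f y) \<le> Sup ((\<lambda>x. ereal (f x)) ` Q i')"
    using i' by (intro Sup_upper) auto
  also have "\<dots> \<le> Inf ((\<lambda>x. ereal (f x)) ` Q i)"
    using i i' \<open>i' < j\<close> by (intro sorted) auto
  also have "\<dots> \<le> ereal (f x)"
    using i by (intro Inf_lower) auto
  finally show ?thesis by simp
qed

theorem theorem3:
  fixes k :: nat and M N :: "'a measure" and f :: "'a \<Rightarrow> real"
    and q s :: "nat \<Rightarrow> real" and Q :: "nat \<Rightarrow> 'a set"
  assumes finM: "finite_measure M" and finN: "finite_measure N"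
    and sets_eq: "sets M = sets N"
    and ac: "absolutely_continuous N M"
    and f_meas: "f \<in> borel_measurable N" and f_nonneg: "\<And>x. x \<in> space N \<Longrightarrow> f x \<ge> 0"
    and RN: "M = density N (\<lambda>x. ennreal (f x))"
    and cases: "(non_atomic N \<and> (\<forall>i\<in>{1..k}. q i \<ge> 0))
              \<or> (finite (space N) \<and> sets N = Pow (space N) \<and> N = count_space (space N)
                 \<and> (\<forall>i\<in>{1..k}. q i \<in> \<int> \<and> q i \<ge> 0))"
    and q_sum: "(\<Sum>i=1..k. q i) = measure N (space N)"
    and s_mono: "\<And>i j. i \<in> {1..k} \<Longrightarrow> j \<in> {1..k} \<Longrightarrow> i \<le> j \<Longrightarrow> s i \<le> s j"
    and Q_part: "partitions_nu_q N k q Q"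
    and Q_sorted: "\<And>i j. i \<in> {1..k} \<Longrightarrow> j \<in> {1..k} \<Longrightarrow> i < j \<Longrightarrow>
                     Sup ((\<lambda>x. ereal (f x)) ` Q i) \<le> Inf ((\<lambda>x. ereal (f x)) ` Q j)"
  shows "\<forall>P. partitions_nu_q N k q P \<longrightarrow> score M k s Q \<ge> score M k s P"
proof (intro allI impI)
  \<comment> \<open>The hypotheses \<open>cases\<close> and \<open>q_sum\<close> only matter for the existence of a sorted \<open>Q\<close>.\<close>
  fix P assume "partitions_nu_q N k q P"
  then have P: "ordered_partition N k P" "\<And>i. i \<in> {1..k} \<Longrightarrow> measure N (P i) = q i"
    by (auto simp: partitions_nu_q_def)
  have Q: "ordered_partition N k Q" "\<And>i. i \<in> {1..k} \<Longrightarrow> measure N (Q i) = q i"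
    using Q_part by (auto simp: partitions_nu_q_def)
  have tail_mass: "(\<Sum>i=j..k. measure M (R i)) = measure M (\<Union>i\<in>{j..k}. R i)"
    if "ordered_partition N k R" "1 \<le> j" for R j
    using measure_UN_ordered_partition[OF that(1) finM sets_eq] that(2) by simp
  have "(\<Sum>i=j..k. measure M (P i)) \<le> (\<Sum>i=j..k. measure M (Q i))" if "1 \<le> j" for j
  proof -
    have "measure N (\<Union>i\<in>{j..k}. P i) = measure N (\<Union>i\<in>{j..k}. Q i)"
      using measure_UN_ordered_partition[OF P(1) finN refl, of "{j..k}"]
        measure_UN_ordered_partition[OF Q(1) finN refl, of "{j..k}"] P(2) Q(2) that by simp
    then have "emeasure M (\<Union>i\<in>{j..k}. P i) \<le> emeasure M (\<Union>i\<in>{j..k}. Q i)"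
      unfolding RN using P(1) Q(1) that f_meas
      by (intro emeasure_density_le_of_superlevel_set[OF finN])
         (auto simp: ordered_partition_def
               intro!: ennreal_leI tail_union_superlevel[OF Q(1) Q_sorted])
    then show ?thesis
      using that P(1) Q(1) finite_measure.emeasure_eq_measure[OF finM] by (simp add: tail_mass)
  qed
  moreover have "(\<Sum>i=1..k. measure M (P i)) = (\<Sum>i=1..k. measure M (Q i))"
    using P(1) Q(1) by (simp add: tail_mass ordered_partition_def)
  moreover have "mono_on {1..k} s"
    using s_mono by (intro mono_onI) auto
  ultimately show "score M k s Q \<ge> score M k s P"
    unfolding score_def by (intro weighted_sum_le_of_tail_sums_le) auto
qed

end
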